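(* The matrices $C_1$ and $C_2$ are not zero divisors in $F$; that is, for $A\in F$, each of $C_1A=0$, $AC_1=0$, $C_2A=0$, $AC_2=0$ implies $A=0$.
   Context: $K$ is an infinite field of characteristic different from 2. Let $X=\{x_1,x_2,x_1',x_2'\}$ and $Y=\{y_1,y_2,y_1',y_2'\}$, and let $K[X;Y]\cong K[X]\otimes_K E(Y)$ be the free supercommutative algebra: the $x$'s are even commuting variables, the $y$'s are odd and pairwise anticommuting ($y y=0$ for each odd generator), and $E(Y)$ is the Grassmann algebra on the vector space with basis $Y$. Put $C_1=\begin{pmatrix} x_1&y_1\\ y_1'&x_1'\end{pmatrix}$, $C_2=\begin{pmatrix} x_2&y_2\\ y_2'&x_2'\end{pmatrix}\in M_2(K[X;Y])$, and let $F=K[C_1,C_2]$ be the unital $K$-subalgebra of $M_2(K[X;Y])$ generated by $C_1,C_2$ (this is the relatively free algebra of rank 2 of $M_{11}(E)$). *)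

theory Defs
  imports Main "HOL-Library.Poly_Mapping"
begin

text \<open>The free supercommutative algebra K[X;Y] = K[X] (x) E(Y).
  Even variables are indexed by nat (x1 = 0, x2 = 1, x1' = 2, x2' = 3), odd variables likewise
  (y1 = 0, y2 = 1, y1' = 2, y2' = 3).
  A basis monomial is a pair (alpha, S): alpha the exponent vector of the even variables,
  S the (finite) set of odd variables, standing for x^alpha * y_{s1} ... y_{sk} with s1 < ... < sk.\<close>

type_synonym mono = "(nat \<Rightarrow>\<^sub>0 nat) \<times> nat set"
type_synonym 'a sc = "mono \<Rightarrow> 'a"

text \<open>Sign of y_T * y_U = sign * y_(T union U) for disjoint T, U (ordered products).\<close>
definition gsign :: "nat set \<Rightarrow> nat set \<Rightarrow> 'a::ring_1" where
  "gsign T U = (- 1) ^ card {(t, u). t \<in> T \<and> u \<in> U \<and> u < t}"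

definition sc_zero :: "'a::ring_1 sc" where
  "sc_zero = (\<lambda>m. 0)"

definition sc_const :: "'a::ring_1 \<Rightarrow> 'a sc" where
  "sc_const c = (\<lambda>m. if m = (0, {}) then c else 0)"

definition sc_add :: "'a::ring_1 sc \<Rightarrow> 'a sc \<Rightarrow> 'a sc" where
  "sc_add f g = (\<lambda>m. f m + g m)"

definition sc_smult :: "'a::ring_1 \<Rightarrow> 'a sc \<Rightarrow> 'a sc" where
  "sc_smult c f = (\<lambda>m. c * f m)"

definition sc_mult :: "'a::ring_1 sc \<Rightarrow> 'a sc \<Rightarrow> 'a sc" where
  "sc_mult f g = (\<lambda>(\<alpha>, S).
     \<Sum>(\<beta>, \<gamma>) \<in> {(\<beta>, \<gamma>). \<beta> + \<gamma> = \<alpha>}.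
       \<Sum>T \<in> Pow S. gsign T (S - T) * f (\<beta>, T) * g (\<gamma>, S - T))"

definition sc_x :: "nat \<Rightarrow> 'a::ring_1 sc" where
  "sc_x i = (\<lambda>m. if m = (Poly_Mapping.single i 1, {}) then 1 else 0)"

definition sc_y :: "nat \<Rightarrow> 'a::ring_1 sc" where
  "sc_y i = (\<lambda>m. if m = (0, {i}) then 1 else 0)"

text \<open>2x2 matrices over K[X;Y], indexed by bool (False = row/column 1, True = row/column 2).\<close>
type_synonym 'a smat = "bool \<Rightarrow> bool \<Rightarrow> 'a sc"

definition smat_zero :: "'a::ring_1 smat" where
  "smat_zero = (\<lambda>i j. sc_zero)"

definition smat_one :: "'a::ring_1 smat" where
  "smat_one = (\<lambda>i j. if i = j then sc_const 1 else sc_zero)"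

definition smat_add :: "'a::ring_1 smat \<Rightarrow> 'a smat \<Rightarrow> 'a smat" where
  "smat_add A B = (\<lambda>i j. sc_add (A i j) (B i j))"

definition smat_smult :: "'a::ring_1 \<Rightarrow> 'a smat \<Rightarrow> 'a smat" where
  "smat_smult c A = (\<lambda>i j. sc_smult c (A i j))"

definition smat_mult :: "'a::ring_1 smat \<Rightarrow> 'a smat \<Rightarrow> 'a smat" where
  "smat_mult A B = (\<lambda>i j. sc_add (sc_mult (A i False) (B False j)) (sc_mult (A i True) (B True j)))"

definition smat_of :: "'a sc \<Rightarrow> 'a sc \<Rightarrow> 'a sc \<Rightarrow> 'a sc \<Rightarrow> 'a smat" where
  "smat_of a b c d = (\<lambda>i j. if \<not> i then (if \<not> j then a else b) else (if \<not> j then c else d))"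

text \<open>C1 = [[x1, y1], [y1', x1']], C2 = [[x2, y2], [y2', x2']].\<close>
definition C1 :: "'a::ring_1 smat" where
  "C1 = smat_of (sc_x 0) (sc_y 0) (sc_y 2) (sc_x 2)"

definition C2 :: "'a::ring_1 smat" where
  "C2 = smat_of (sc_x 1) (sc_y 1) (sc_y 3) (sc_x 3)"

inductive_set Falg :: "'a::ring_1 smat set" where
  one: "smat_one \<in> Falg"
| gen1: "C1 \<in> Falg"
| gen2: "C2 \<in> Falg"
| add: "A \<in> Falg \<Longrightarrow> B \<in> Falg \<Longrightarrow> smat_add A B \<in> Falg"
| smult: "A \<in> Falg \<Longrightarrow> smat_smult c A \<in> Falg"
| mult: "A \<in> Falg \<Longrightarrow> B \<in> Falg \<Longrightarrow> smat_mult A B \<in> Falg"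

end

theory Submission
  imports Defs
begin

text \<open>Both C1 and C2 have the shape [[x_i, y_j], [y_k, x_l]], and such a matrix is not a zero
  divisor in all of M_2(K[X;Y]), over any ring K. For a
  column (a, c) of A, the equation C A = 0 reads x_i a + y_j c = 0 and y_k a + x_l c = 0.
  Comparing coefficients, each coefficient of a is, up to sign, a coefficient of c at a monomial
  without y_j, and each coefficient of c is, up to sign, a coefficient of a at a monomial without
  y_k. Following these relations twice from a coefficient of a lands at a coefficient of a whose
  monomial lacks y_j, which is zero by the first relation. Hence a = c = 0. The same argument
  works for A C = 0 with rows instead of columns.\<close>

lemma finite_summand_pairs:
  fixes \<alpha> :: "'a \<Rightarrow>\<^sub>0 nat"
  shows "finite {(\<beta>, \<gamma>). \<beta> + \<gamma> = \<alpha>}"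
proof -
  define D where "D = {(\<beta>, \<gamma>). \<beta> + \<gamma> = \<alpha>}"
  define n :: nat where "n = (\<Sum>k\<in>Poly_Mapping.keys \<alpha>. Poly_Mapping.lookup \<alpha> k)"
  have "Poly_Mapping.lookup \<beta> k \<le> n" if "\<beta> + \<gamma> = \<alpha>" for \<beta> \<gamma> k
  proof -
    have "Poly_Mapping.lookup \<beta> k \<le> Poly_Mapping.lookup \<alpha> k"
      using that by (auto simp: lookup_add)
    also have "\<dots> \<le> n"
      unfolding n_def by (cases "k \<in> Poly_Mapping.keys \<alpha>") (auto intro: member_le_sum simp: in_keys_iff)
    finally show ?thesis .
  qed
  then have "(Poly_Mapping.lookup \<circ> fst) ` D \<subseteq>
      {f. \<forall>k. (k \<in> Poly_Mapping.keys \<alpha> \<longrightarrow> f k \<in> {..n}) \<and> (k \<notin> Poly_Mapping.keys \<alpha> \<longrightarrow> f k = 0)}"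
    unfolding D_def by (auto simp: lookup_add in_keys_iff)
  then have "finite ((Poly_Mapping.lookup \<circ> fst) ` D)"
    by (rule finite_subset) (intro finite_set_of_finite_funs; simp)
  moreover have "inj_on (Poly_Mapping.lookup \<circ> fst) D"
    unfolding D_def by (auto simp: inj_on_def poly_mapping_eqI)
  ultimately show ?thesis
    unfolding D_def by (rule finite_imageD)
qed

definition sc_monomial :: "mono \<Rightarrow> 'a::ring_1 sc" where
  "sc_monomial m = (\<lambda>m'. if m' = m then 1 else 0)"

lemma sc_x_eq_monomial: "sc_x i = sc_monomial (Poly_Mapping.single i 1, {})"
  by (auto simp: sc_x_def sc_monomial_def)

lemma sc_y_eq_monomial: "sc_y i = sc_monomial (0, {i})"
  by (auto simp: sc_y_def sc_monomial_def)

lemma gsign_empty_left [simp]: "gsign {} U = 1"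
  by (simp add: gsign_def)

lemma gsign_empty_right [simp]: "gsign T {} = 1"
  by (simp add: gsign_def)

lemma sc_mult_monomial_left:
  assumes "finite S"
  shows "sc_mult (sc_monomial (\<beta>, T)) g (\<beta> + \<gamma>, S)
    = (if T \<subseteq> S then gsign T (S - T) * g (\<gamma>, S - T) else 0)"
proof -
  have inner: "(\<Sum>T' \<in> Pow S. gsign T' (S - T') * sc_monomial (\<beta>, T) (\<beta>', T') * g (\<gamma>', S - T'))
     = (if \<beta>' = \<beta> \<and> T \<subseteq> S then gsign T (S - T) * g (\<gamma>', S - T) else 0)" for \<beta>' \<gamma>'
  proof -
    have "(\<Sum>T' \<in> Pow S. gsign T' (S - T') * sc_monomial (\<beta>, T) (\<beta>', T') * g (\<gamma>', S - T'))
       = (\<Sum>T' \<in> Pow S. if T' = T then (if \<beta>' = \<beta> then gsign T' (S - T') * g (\<gamma>', S - T') else 0) else 0)"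
      by (rule sum.cong) (auto simp: sc_monomial_def)
    then show ?thesis
      using assms by (simp add: sum.delta)
  qed
  have "sc_mult (sc_monomial (\<beta>, T)) g (\<beta> + \<gamma>, S)
      = (\<Sum>p \<in> {(\<beta>', \<gamma>'). \<beta>' + \<gamma>' = \<beta> + \<gamma>}.
           if p = (\<beta>, \<gamma>) then (if T \<subseteq> S then gsign T (S - T) * g (\<gamma>, S - T) else 0) else 0)"
    unfolding sc_mult_def by (auto simp: inner intro!: sum.cong)
  also have "\<dots> = (if T \<subseteq> S then gsign T (S - T) * g (\<gamma>, S - T) else 0)"
    using finite_summand_pairs by (subst sum.delta) auto
  finally show ?thesis .
qed

lemma sc_mult_monomial_right:
  assumes "finite S"
  shows "sc_mult f (sc_monomial (\<beta>, T)) (\<gamma> + \<beta>, S)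
    = (if T \<subseteq> S then gsign (S - T) T * f (\<gamma>, S - T) else 0)"
proof -
  have inner: "(\<Sum>T' \<in> Pow S. gsign T' (S - T') * f (\<gamma>', T') * sc_monomial (\<beta>, T) (\<beta>', S - T'))
     = (if \<beta>' = \<beta> \<and> T \<subseteq> S then gsign (S - T) T * f (\<gamma>', S - T) else 0)" for \<beta>' \<gamma>'
  proof -
    have "(\<Sum>T' \<in> Pow S. gsign T' (S - T') * f (\<gamma>', T') * sc_monomial (\<beta>, T) (\<beta>', S - T'))
       = (\<Sum>T' \<in> Pow S. if T' = S - T \<and> T \<subseteq> S
            then (if \<beta>' = \<beta> then gsign T' (S - T') * f (\<gamma>', T') else 0) else 0)"
      by (rule sum.cong) (auto simp: sc_monomial_def)
    also have "\<dots> = (if \<beta>' = \<beta> \<and> T \<subseteq> S then gsign (S - T) T * f (\<gamma>', S - T) else 0)"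
      using assms by (cases "T \<subseteq> S") (auto simp: double_diff)
    finally show ?thesis .
  qed
  have "sc_mult f (sc_monomial (\<beta>, T)) (\<gamma> + \<beta>, S)
      = (\<Sum>p \<in> {(\<gamma>', \<beta>'). \<gamma>' + \<beta>' = \<gamma> + \<beta>}.
           if p = (\<gamma>, \<beta>) then (if T \<subseteq> S then gsign (S - T) T * f (\<gamma>, S - T) else 0) else 0)"
    unfolding sc_mult_def by (auto simp: inner intro!: sum.cong)
  also have "\<dots> = (if T \<subseteq> S then gsign (S - T) T * f (\<gamma>, S - T) else 0)"
    using finite_summand_pairs by (subst sum.delta) auto
  finally show ?thesis .
qed

lemma sc_mult_x_left: "finite S \<Longrightarrow> sc_mult (sc_x i) g (Poly_Mapping.single i 1 + \<alpha>, S) = g (\<alpha>, S)"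
  unfolding sc_x_eq_monomial by (subst sc_mult_monomial_left) auto

lemma sc_mult_x_right: "finite S \<Longrightarrow> sc_mult g (sc_x i) (\<alpha> + Poly_Mapping.single i 1, S) = g (\<alpha>, S)"
  unfolding sc_x_eq_monomial by (subst sc_mult_monomial_right) auto

lemma sc_mult_y_left:
  "finite S \<Longrightarrow> sc_mult (sc_y i) g (\<alpha>, S) = (if i \<in> S then gsign {i} (S - {i}) * g (\<alpha>, S - {i}) else 0)"
  unfolding sc_y_eq_monomial using sc_mult_monomial_left[of S 0 "{i}" g \<alpha>] by simp

lemma sc_mult_y_right:
  "finite S \<Longrightarrow> sc_mult g (sc_y i) (\<alpha>, S) = (if i \<in> S then gsign (S - {i}) {i} * g (\<alpha>, S - {i}) else 0)"
  unfolding sc_y_eq_monomial using sc_mult_monomial_right[of S g 0 "{i}" \<alpha>] by simp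

text \<open>The type 'a sc also has coefficients at the junk monomials with infinitely
  many odd variables; the elements of K[X;Y] are those vanishing there.\<close>

definition finite_odd_support :: "'a::ring_1 sc \<Rightarrow> bool" where
  "finite_odd_support f \<longleftrightarrow> (\<forall>\<alpha> S. infinite S \<longrightarrow> f (\<alpha>, S) = 0)"

lemma finite_odd_support_sc_mult: "finite_odd_support (sc_mult f g)"
  unfolding finite_odd_support_def sc_mult_def by (auto intro!: sum.neutral)

lemma finite_odd_support_sc_add:
  "finite_odd_support f \<Longrightarrow> finite_odd_support g \<Longrightarrow> finite_odd_support (sc_add f g)"
  unfolding finite_odd_support_def sc_add_def by auto

lemma finite_odd_support_sc_smult: "finite_odd_support f \<Longrightarrow> finite_odd_support (sc_smult c f)"
  unfolding finite_odd_support_def sc_smult_def by auto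

lemma finite_odd_support_Falg:
  assumes "A \<in> Falg"
  shows "finite_odd_support (A i j)"
  using assms
proof (induction A arbitrary: i j rule: Falg.induct)
  case one
  show ?case
    by (auto simp: smat_one_def finite_odd_support_def sc_const_def sc_zero_def)
next
  case gen1
  show ?case
    by (auto simp: C1_def smat_of_def finite_odd_support_def sc_x_def sc_y_def)
next
  case gen2
  show ?case
    by (auto simp: C2_def smat_of_def finite_odd_support_def sc_x_def sc_y_def)
next
  case (add A B)
  then show ?case by (simp add: smat_add_def finite_odd_support_sc_add)
next
  case (smult A c)
  then show ?case by (simp add: smat_smult_def finite_odd_support_sc_smult)
next
  case (mult A B)
  show ?case by (simp add: smat_mult_def finite_odd_support_sc_add finite_odd_support_sc_mult)
qed

lemma coupled_coefficients_zero:
  fixes a c :: "'a::ring_1 sc"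
  assumes "finite_odd_support a" and "finite_odd_support c"
    and a_rel: "\<And>\<alpha> S. finite S \<Longrightarrow>
      a (\<alpha>, S) + (if j \<in> S then s S * c (p + \<alpha>, S - {j}) else 0) = 0"
    and c_rel: "\<And>\<alpha> S. finite S \<Longrightarrow>
      (if k \<in> S then t S * a (q + \<alpha>, S - {k}) else 0) + c (\<alpha>, S) = 0"
  shows "a = sc_zero \<and> c = sc_zero"
proof -
  have a_no_j: "a (\<alpha>, S) = 0" if "finite S" "j \<notin> S" for \<alpha> S
    using a_rel[OF that(1), of \<alpha>] that by simp
  have c_no_k: "c (\<alpha>, S) = 0" if "finite S" "k \<notin> S" for \<alpha> S
    using c_rel[OF that(1), of \<alpha>] that by simp
  have a_zero: "a (\<alpha>, S) = 0" if "finite S" for \<alpha> S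
  proof (cases "j \<in> S")
    case True
    have "c (p + \<alpha>, S - {j}) = 0"
    proof (cases "k \<in> S - {j}")
      case True
      then show ?thesis
        using c_rel[of "S - {j}" "p + \<alpha>"] a_no_j[of "S - {j} - {k}"] \<open>finite S\<close> by simp
    qed (use c_no_k that in auto)
    then show ?thesis
      using a_rel[OF that, of \<alpha>] True by simp
  qed (use a_no_j that in auto)
  have c_zero: "c (\<alpha>, S) = 0" if "finite S" for \<alpha> S
    using c_rel[OF that, of \<alpha>] a_zero[of "S - {k}"] that by (cases "k \<in> S") auto
  show ?thesis
    using a_zero c_zero assms(1,2) unfolding finite_odd_support_def sc_zero_def
    by (metis surj_pair)
qed

definition generic_smat :: "nat \<Rightarrow> nat \<Rightarrow> nat \<Rightarrow> nat \<Rightarrow> 'a::ring_1 smat" where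
  "generic_smat i j k l = smat_of (sc_x i) (sc_y j) (sc_y k) (sc_x l)"

lemma generic_smat_left_cancel:
  fixes A :: "'a::ring_1 smat"
  assumes "\<And>r s. finite_odd_support (A r s)"
    and zero: "smat_mult (generic_smat i j k l) A = smat_zero"
  shows "A = smat_zero"
proof -
  have "A False col = sc_zero \<and> A True col = sc_zero" for col
  proof (rule coupled_coefficients_zero[OF assms(1) assms(1),
        where p = "Poly_Mapping.single i 1" and q = "Poly_Mapping.single l 1"
          and s = "\<lambda>S. gsign {j} (S - {j})" and t = "\<lambda>S. gsign {k} (S - {k})"])
    fix \<alpha> and S :: "nat set"
    assume "finite S"
    have "smat_mult (generic_smat i j k l) A False col (Poly_Mapping.single i 1 + \<alpha>, S) = 0"
      "smat_mult (generic_smat i j k l) A True col (Poly_Mapping.single l 1 + \<alpha>, S) = 0"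
      using zero by (simp_all add: smat_zero_def sc_zero_def)
    with \<open>finite S\<close>
    show "A False col (\<alpha>, S) + (if j \<in> S
        then gsign {j} (S - {j}) * A True col (Poly_Mapping.single i 1 + \<alpha>, S - {j}) else 0) = 0"
      and "(if k \<in> S then gsign {k} (S - {k}) * A False col (Poly_Mapping.single l 1 + \<alpha>, S - {k})
        else 0) + A True col (\<alpha>, S) = 0"
      using sc_mult_x_left[OF \<open>finite S\<close>, of i "A False col" \<alpha>]
        sc_mult_x_left[OF \<open>finite S\<close>, of l "A True col" \<alpha>]
      by (auto simp: smat_mult_def generic_smat_def smat_of_def sc_add_def sc_mult_y_left)
  qed
  then show ?thesis
    unfolding smat_zero_def by (intro ext) (metis (full_types))
qed

lemma generic_smat_right_cancel:
  fixes A :: "'a::ring_1 smat"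
  assumes "\<And>r s. finite_odd_support (A r s)"
    and zero: "smat_mult A (generic_smat i j k l) = smat_zero"
  shows "A = smat_zero"
proof -
  have "A row False = sc_zero \<and> A row True = sc_zero" for row
  proof (rule coupled_coefficients_zero[OF assms(1) assms(1),
        where p = "Poly_Mapping.single i 1" and q = "Poly_Mapping.single l 1"
          and s = "\<lambda>S. gsign (S - {k}) {k}" and t = "\<lambda>S. gsign (S - {j}) {j}"])
    fix \<alpha> and S :: "nat set"
    assume "finite S"
    have "smat_mult A (generic_smat i j k l) row False (\<alpha> + Poly_Mapping.single i 1, S) = 0"
      "smat_mult A (generic_smat i j k l) row True (\<alpha> + Poly_Mapping.single l 1, S) = 0"
      using zero by (simp_all add: smat_zero_def sc_zero_def)
    with \<open>finite S\<close>
    show "A row False (\<alpha>, S) + (if k \<in> S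
        then gsign (S - {k}) {k} * A row True (Poly_Mapping.single i 1 + \<alpha>, S - {k}) else 0) = 0"
      and "(if j \<in> S then gsign (S - {j}) {j} * A row False (Poly_Mapping.single l 1 + \<alpha>, S - {j})
        else 0) + A row True (\<alpha>, S) = 0"
      using sc_mult_x_right[OF \<open>finite S\<close>, of "A row False" i \<alpha>]
        sc_mult_x_right[OF \<open>finite S\<close>, of "A row True" l \<alpha>]
      by (auto simp: smat_mult_def generic_smat_def smat_of_def sc_add_def sc_mult_y_right add.commute)
  qed
  then show ?thesis
    unfolding smat_zero_def by (intro ext) (metis (full_types))
qed

theorem lemma2:
  fixes A :: "'a::field smat"
  assumes "infinite (UNIV :: 'a set)"
    and "(2::'a) \<noteq> 0"
    and "A \<in> Falg"
  shows "(smat_mult C1 A = smat_zero \<longrightarrow> A = smat_zero)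
       \<and> (smat_mult A C1 = smat_zero \<longrightarrow> A = smat_zero)
       \<and> (smat_mult C2 A = smat_zero \<longrightarrow> A = smat_zero)
       \<and> (smat_mult A C2 = smat_zero \<longrightarrow> A = smat_zero)"
proof -
  have entries: "\<And>r s. finite_odd_support (A r s)"
    using finite_odd_support_Falg[OF \<open>A \<in> Falg\<close>] .
  have C_generic: "C1 = generic_smat 0 0 2 2" "C2 = generic_smat 1 1 3 3"
    by (simp_all add: C1_def C2_def generic_smat_def)
  show ?thesis
    unfolding C_generic
    using generic_smat_left_cancel[where A = A, OF entries] generic_smat_right_cancel[where A = A, OF entries]
    by blast
qed

end
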